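(* Let $\Gamma_0$ be a nonempty finite set of formulas over $\Sigma^\circ$ closed under subformulas, and let $\nu_0:\Gamma_0\to\{T,t,F\}$ satisfy: (1) if $\#\beta\in\Gamma_0$ for $\#\in\{\neg,\circ\}$, then $\nu_0(\#\beta)\in\tilde\#\nu_0(\beta)$; (2) if $\varphi\#\psi\in\Gamma_0$ for $\#\in\{\wedge,\vee,\to\}$, then $\nu_0(\varphi\#\psi)\in\nu_0(\varphi)\tilde\#\nu_0(\psi)$; (3) if $\alpha\wedge\neg\alpha\in\Gamma_0$ and $\nu_0(\alpha)=t$, then $\nu_0(\alpha\wedge\neg\alpha)=T$. Then there exists $\nu\in\mathcal{F}_{\bf Cila}$ with $\nu(\alpha)=\nu_0(\alpha)$ for all $\alpha\in\Gamma_0$.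
   Context: $\Sigma^\circ$ has unary $\neg,\circ$ and binary $\wedge,\vee,\to$; formulas over a denumerable set of variables. $\mathcal{A}_{\bf Cila}$ is the $\Sigma^\circ$-multialgebra with universe $\{F,t,T\}$, $D=\{t,T\}$, and: $F\tilde\vee F=\{F\}$, $F\tilde\vee T=T\tilde\vee F=T\tilde\vee T=\{T\}$, $x\tilde\vee y=D$ whenever $t\in\{x,y\}$; $x\tilde\wedge y=\{F\}$ if $F\in\{x,y\}$, $T\tilde\wedge T=\{T\}$, $t\tilde\wedge t=t\tilde\wedge T=T\tilde\wedge t=D$; $\tilde\neg F=\{T\}$, $\tilde\neg t=D$, $\tilde\neg T=\{F\}$; $F\tilde\to F=F\tilde\to T=T\tilde\to T=\{T\}$, $t\tilde\to F=T\tilde\to F=\{F\}$, $x\tilde\to t=D$ for all $x$, $t\tilde\to T=D$; $\tilde\circ F=\tilde\circ T=\{T\}$, $\tilde\circ t=\{F\}$. A valuation is a map $\nu$ from all formulas to $\{F,t,T\}$ with $\nu(\#\alpha)\in\tilde\#\nu(\alpha)$ and $\nu(\alpha\#\beta)\in\nu(\alpha)\tilde\#\nu(\beta)$. $\mathcal{F}_{\bf Cila}$ is the set of valuations with $\nu(\alpha)=t\Rightarrow\nu(\alpha\wedge\neg\alpha)=T$ for every formula $\alpha$. *)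

theory Defs
  imports Main
begin

datatype fmla = Var nat | Neg fmla | Circ fmla
  | Conj fmla fmla | Disj fmla fmla | Imp fmla fmla

datatype tv = F | t | T

definition D :: "tv set" where "D = {t, T}"

fun neg_op :: "tv \<Rightarrow> tv set" where
  "neg_op F = {T}" | "neg_op t = D" | "neg_op T = {F}"

fun circ_op :: "tv \<Rightarrow> tv set" where
  "circ_op F = {T}" | "circ_op t = {F}" | "circ_op T = {T}"

fun disj_op :: "tv \<Rightarrow> tv \<Rightarrow> tv set" where
  "disj_op F F = {F}"
| "disj_op F T = {T}"
| "disj_op T F = {T}"
| "disj_op T T = {T}"
| "disj_op _ _ = D"

fun conj_op :: "tv \<Rightarrow> tv \<Rightarrow> tv set" where
  "conj_op F _ = {F}"
| "conj_op _ F = {F}"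
| "conj_op T T = {T}"
| "conj_op _ _ = D"

fun imp_op :: "tv \<Rightarrow> tv \<Rightarrow> tv set" where
  "imp_op _ t = D"
| "imp_op F F = {T}"
| "imp_op F T = {T}"
| "imp_op T T = {T}"
| "imp_op t F = {F}"
| "imp_op T F = {F}"
| "imp_op t T = D"

fun imm_sub :: "fmla \<Rightarrow> fmla set" where
  "imm_sub (Var n) = {}"
| "imm_sub (Neg a) = {a}"
| "imm_sub (Circ a) = {a}"
| "imm_sub (Conj a b) = {a, b}"
| "imm_sub (Disj a b) = {a, b}"
| "imm_sub (Imp a b) = {a, b}"

definition closed_sub :: "fmla set \<Rightarrow> bool" where
  "closed_sub G \<longleftrightarrow> (\<forall>a\<in>G. imm_sub a \<subseteq> G)"

definition valuation :: "(fmla \<Rightarrow> tv) \<Rightarrow> bool" where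
  "valuation v \<longleftrightarrow>
     (\<forall>a. v (Neg a) \<in> neg_op (v a)) \<and>
     (\<forall>a. v (Circ a) \<in> circ_op (v a)) \<and>
     (\<forall>a b. v (Conj a b) \<in> conj_op (v a) (v b)) \<and>
     (\<forall>a b. v (Disj a b) \<in> disj_op (v a) (v b)) \<and>
     (\<forall>a b. v (Imp a b) \<in> imp_op (v a) (v b))"

definition F_Cila :: "(fmla \<Rightarrow> tv) set" where
  "F_Cila = {v. valuation v \<and> (\<forall>a. v a = t \<longrightarrow> v (Conj a (Neg a)) = T)}"

end

theory Submission
  imports Defs
begin

text \<open>Outside \<open>\<Gamma>\<^sub>0\<close> the valuation is extended by induction on formulas, choosing any
  admissible value of the multioperation. The only care needed concerns the Cila condition:
  if \<open>\<nu>(\<alpha>) = t\<close> then \<open>\<nu>(\<not>\<alpha>) \<in> D\<close>, so \<open>T \<in> t \<and>\<^sup>~ \<nu>(\<not>\<alpha>)\<close>, and a choice that prefers \<open>T\<close>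
  satisfies it automatically.\<close>

definition valuation_on :: "fmla set \<Rightarrow> (fmla \<Rightarrow> tv) \<Rightarrow> bool" where
  "valuation_on G v \<longleftrightarrow>
     (\<forall>a. Neg a \<in> G \<longrightarrow> v (Neg a) \<in> neg_op (v a)) \<and>
     (\<forall>a. Circ a \<in> G \<longrightarrow> v (Circ a) \<in> circ_op (v a)) \<and>
     (\<forall>a b. Conj a b \<in> G \<longrightarrow> v (Conj a b) \<in> conj_op (v a) (v b)) \<and>
     (\<forall>a b. Disj a b \<in> G \<longrightarrow> v (Disj a b) \<in> disj_op (v a) (v b)) \<and>
     (\<forall>a b. Imp a b \<in> G \<longrightarrow> v (Imp a b) \<in> imp_op (v a) (v b))"

definition choose_T_first :: "tv set \<Rightarrow> tv" where
  "choose_T_first S = (if T \<in> S then T else if F \<in> S then F else t)"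

lemma choose_T_first_in: "S \<noteq> {} \<Longrightarrow> choose_T_first S \<in> S"
  unfolding choose_T_first_def by (metis all_not_in_conv tv.exhaust)

lemma neg_op_nonempty: "neg_op x \<noteq> {}"
  by (cases x) (auto simp: D_def)

lemma circ_op_nonempty: "circ_op x \<noteq> {}"
  by (cases x) auto

lemma conj_op_nonempty: "conj_op x y \<noteq> {}"
  by (cases x; cases y) (auto simp: D_def)

lemma disj_op_nonempty: "disj_op x y \<noteq> {}"
  by (cases x; cases y) (auto simp: D_def)

lemma imp_op_nonempty: "imp_op x y \<noteq> {}"
  by (cases x; cases y) (auto simp: D_def)

lemma T_in_conj_op_t_designated: "y \<in> D \<Longrightarrow> T \<in> conj_op t y"
  by (auto simp: D_def)

primrec extend :: "fmla set \<Rightarrow> (fmla \<Rightarrow> tv) \<Rightarrow> fmla \<Rightarrow> tv" where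
  "extend G v (Var n) = (if Var n \<in> G then v (Var n) else F)"
| "extend G v (Neg a) =
     (if Neg a \<in> G then v (Neg a) else choose_T_first (neg_op (extend G v a)))"
| "extend G v (Circ a) =
     (if Circ a \<in> G then v (Circ a) else choose_T_first (circ_op (extend G v a)))"
| "extend G v (Conj a b) =
     (if Conj a b \<in> G then v (Conj a b)
      else choose_T_first (conj_op (extend G v a) (extend G v b)))"
| "extend G v (Disj a b) =
     (if Disj a b \<in> G then v (Disj a b)
      else choose_T_first (disj_op (extend G v a) (extend G v b)))"
| "extend G v (Imp a b) =
     (if Imp a b \<in> G then v (Imp a b)
      else choose_T_first (imp_op (extend G v a) (extend G v b)))"

lemma extend_agrees: "a \<in> G \<Longrightarrow> extend G v a = v a"
  by (cases a) auto

lemma valuation_extend: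
  assumes "closed_sub G" and "valuation_on G v"
  shows "valuation (extend G v)"
  using assms
  unfolding valuation_def valuation_on_def closed_sub_def
  by (auto simp: extend_agrees choose_T_first_in neg_op_nonempty circ_op_nonempty
        conj_op_nonempty disj_op_nonempty imp_op_nonempty)

lemma extend_in_F_Cila:
  assumes closed: "closed_sub G" and "valuation_on G v"
    and cila: "\<And>a. Conj a (Neg a) \<in> G \<Longrightarrow> v a = t \<Longrightarrow> v (Conj a (Neg a)) = T"
  shows "extend G v \<in> F_Cila"
proof -
  let ?v = "extend G v"
  have val: "valuation ?v"
    using assms valuation_extend by blast
  have "?v (Conj a (Neg a)) = T" if at: "?v a = t" for a
  proof (cases "Conj a (Neg a) \<in> G")
    case True
    then have "a \<in> G"
      using closed unfolding closed_sub_def by fastforce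
    with True at cila show ?thesis
      by (simp add: extend_agrees)
  next
    case False
    have "?v (Neg a) \<in> D"
      using val at unfolding valuation_def by (metis neg_op.simps(2))
    then have "T \<in> conj_op (?v a) (?v (Neg a))"
      using at T_in_conj_op_t_designated by simp
    with False show ?thesis
      by (simp add: choose_T_first_def)
  qed
  with val show ?thesis
    unfolding F_Cila_def by blast
qed

theorem mainTheorem8:
  fixes G0 :: "fmla set" and v0 :: "fmla \<Rightarrow> tv"
  assumes "G0 \<noteq> {}" and "finite G0" and "closed_sub G0"
    and "\<And>b. Neg b \<in> G0 \<Longrightarrow> v0 (Neg b) \<in> neg_op (v0 b)"
    and "\<And>b. Circ b \<in> G0 \<Longrightarrow> v0 (Circ b) \<in> circ_op (v0 b)"
    and "\<And>a b. Conj a b \<in> G0 \<Longrightarrow> v0 (Conj a b) \<in> conj_op (v0 a) (v0 b)"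
    and "\<And>a b. Disj a b \<in> G0 \<Longrightarrow> v0 (Disj a b) \<in> disj_op (v0 a) (v0 b)"
    and "\<And>a b. Imp a b \<in> G0 \<Longrightarrow> v0 (Imp a b) \<in> imp_op (v0 a) (v0 b)"
    and "\<And>a. Conj a (Neg a) \<in> G0 \<Longrightarrow> v0 a = t \<Longrightarrow> v0 (Conj a (Neg a)) = T"
  shows "\<exists>v\<in>F_Cila. \<forall>a\<in>G0. v a = v0 a"
proof
  have "valuation_on G0 v0"
    using assms(4-8) unfolding valuation_on_def by blast
  then show "extend G0 v0 \<in> F_Cila"
    using assms(3,9) extend_in_F_Cila by blast
  show "\<forall>a\<in>G0. extend G0 v0 a = v0 a"
    by (simp add: extend_agrees)
qed

end
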